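(* Let $f:\mathbb{R}\to\mathbb{R}$ be a bounded Abel continuous function. Then $f$ is linear, i.e. there exist $a,b\in\mathbb{R}$ with $f(t)=at+b$ for all $t\in\mathbb{R}$.
   Context: A sequence $(p_n)$ is Abel convergent to $\ell$ if $\sum_{k=0}^{\infty}p_k x^k$ converges for every $0\le x<1$ and $\lim_{x\to 1^-}(1-x)\sum_{k=0}^{\infty}p_k x^k=\ell$. $f$ is Abel continuous if $(f(p_n))$ is Abel convergent to $f(\ell)$ whenever $(p_n)$ is Abel convergent to $\ell$. "Linear" here is used in the sense of a function of the form $t\mapsto at+b$. *)

theory Defs
  imports "HOL-Analysis.Analysis"
begin

definition abel_convergent :: "(nat \<Rightarrow> real) \<Rightarrow> real \<Rightarrow> bool" where
  "abel_convergent p l \<longleftrightarrow>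
     (\<forall>x::real. 0 \<le> x \<and> x < 1 \<longrightarrow> summable (\<lambda>k. p k * x ^ k)) \<and>
     ((\<lambda>x. (1 - x) * (\<Sum>k. p k * x ^ k)) \<longlongrightarrow> l) (at_left 1)"

definition abel_continuous :: "(real \<Rightarrow> real) \<Rightarrow> bool" where
  "abel_continuous f \<longleftrightarrow>
     (\<forall>p l. abel_convergent p l \<longrightarrow> abel_convergent (\<lambda>n. f (p n)) (f l))"

end

theory Submission
  imports Defs
begin

text \<open>Feeding the oscillating sequence \<open>u, v, u, v, \<dots>\<close>, whose Abel limit is \<open>(u + v)/2\<close>, to an Abel
  continuous \<open>f\<close> shows that \<open>f\<close> satisfies Jensen's midpoint equation. Hence
  \<open>f (2^n t) - f 0 = 2^n (f t - f 0)\<close>, which for bounded \<open>f\<close> forces \<open>f t = f 0\<close>: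
  the linear function is in fact constant.\<close>

lemma alternating_power_sums:
  fixes A B x :: real
  assumes "0 \<le> x" "x < 1"
  shows "(\<lambda>k. (A + B * (-1)^k) * x^k) sums (A / (1 - x) + B / (1 + x))"
proof -
  have "(\<lambda>k. A * x^k) sums (A * (1 / (1 - x)))"
    using assms by (intro sums_mult geometric_sums) simp
  moreover have "(\<lambda>k. B * (-x)^k) sums (B * (1 / (1 - (-x))))"
    using assms by (intro sums_mult geometric_sums) simp
  ultimately have "(\<lambda>k. A * x^k + B * (-x)^k) sums (A / (1 - x) + B / (1 + x))"
    using sums_add by fastforce
  moreover have "A * x^k + B * (-x)^k = (A + B * (-1)^k) * x^k" for k
    by (subst power_minus) (simp only: distrib_right mult.assoc)
  ultimately show ?thesis by simp
qed

lemma abel_convergent_alternating: "abel_convergent (\<lambda>k. A + B * (-1)^k) A"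
  unfolding abel_convergent_def
proof (intro conjI allI impI)
  fix x :: real assume "0 \<le> x \<and> x < 1"
  then show "summable (\<lambda>k. (A + B * (-1)^k) * x^k)"
    using alternating_power_sums sums_summable by blast
next
  have "\<forall>\<^sub>F x in at_left (1::real). x \<in> {0<..<1}"
    by (intro eventually_at_left_real) simp
  then have ev: "\<forall>\<^sub>F x in at_left (1::real).
      A + B * ((1 - x) / (1 + x)) = (1 - x) * (\<Sum>k. (A + B * (-1)^k) * x^k)"
  proof (rule eventually_mono)
    fix x :: real assume x: "x \<in> {0<..<1}"
    then have "(\<Sum>k. (A + B * (-1)^k) * x^k) = A / (1 - x) + B / (1 + x)"
      using alternating_power_sums[of x A B] sums_unique by fastforce
    moreover have "A + B * ((1 - x) / (1 + x)) = (1 - x) * (A / (1 - x) + B / (1 + x))"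
      using x by (simp add: distrib_left)
    ultimately show "A + B * ((1 - x) / (1 + x)) = (1 - x) * (\<Sum>k. (A + B * (-1)^k) * x^k)"
      by simp
  qed
  have "((\<lambda>x. A + B * ((1 - x) / (1 + x))) \<longlongrightarrow> A + B * ((1 - 1) / (1 + 1))) (at_left (1::real))"
    by (intro tendsto_intros) auto
  then show "((\<lambda>x. (1 - x) * (\<Sum>k. (A + B * (-1)^k) * x^k)) \<longlongrightarrow> A) (at_left 1)"
    using ev by (simp add: Lim_transform_eventually)
qed

lemma abel_convergent_unique:
  assumes "abel_convergent p l" "abel_convergent p m"
  shows "l = m"
  using assms tendsto_unique trivial_limit_at_left_real
  unfolding abel_convergent_def by blast

lemma abel_continuous_midpoint:
  assumes "abel_continuous f"
  shows "f ((u + v) / 2) = (f u + f v) / 2"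
proof -
  define p where "p = (\<lambda>k::nat. (u + v) / 2 + (u - v) / 2 * (-1::real)^k)"
  have "abel_convergent (\<lambda>k. f (p k)) (f ((u + v) / 2))"
    using assms abel_convergent_alternating unfolding abel_continuous_def p_def by blast
  moreover have "(\<lambda>k. f (p k)) = (\<lambda>k. (f u + f v) / 2 + (f u - f v) / 2 * (-1::real)^k)"
  proof
    show "f (p k) = (f u + f v) / 2 + (f u - f v) / 2 * (-1::real)^k" for k
      by (cases "even k") (simp_all add: p_def field_simps)
  qed
  ultimately show ?thesis
    using abel_convergent_unique abel_convergent_alternating by metis
qed

lemma jensen_equation_doubling:
  fixes f :: "real \<Rightarrow> real"
  assumes "\<And>u v. f ((u + v) / 2) = (f u + f v) / 2"
  shows "f (2^n * t) - f 0 = 2^n * (f t - f 0)"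
proof (induction n)
  case 0
  show ?case by simp
next
  case (Suc n)
  have "f (2^n * t) = (f 0 + f (2^Suc n * t)) / 2"
    using assms[of 0 "2^Suc n * t"] by simp
  with Suc show ?case by simp
qed

lemma bounded_jensen_equation_imp_constant:
  fixes f :: "real \<Rightarrow> real"
  assumes bounded: "bounded (range f)"
    and midpoint: "\<And>u v. f ((u + v) / 2) = (f u + f v) / 2"
  shows "f t = f 0"
proof (rule ccontr)
  assume "f t \<noteq> f 0"
  then have d: "\<bar>f t - f 0\<bar> > 0" by simp
  obtain M where M: "\<And>y. \<bar>f y\<bar> \<le> M"
    using bounded unfolding bounded_iff by auto
  obtain n :: nat where "2 * M / \<bar>f t - f 0\<bar> < real n"
    using reals_Archimedean2 by blast
  also have "real n < 2^n" by (rule of_nat_less_two_power)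
  finally have "2 * M < 2^n * \<bar>f t - f 0\<bar>"
    using d by (simp add: field_simps)
  also have "\<dots> = \<bar>f (2^n * t) - f 0\<bar>"
    using jensen_equation_doubling[OF midpoint] by (simp add: abs_mult)
  also have "\<dots> \<le> 2 * M"
    using M[of "2^n * t"] M[of 0] by linarith
  finally show False by simp
qed

theorem corollary7:
  fixes f :: "real \<Rightarrow> real"
  assumes "bounded (range f)"
    and "abel_continuous f"
  shows "\<exists>a b. \<forall>t. f t = a * t + b"
proof -
  have "f t = 0 * t + f 0" for t
    using bounded_jensen_equation_imp_constant[OF assms(1) abel_continuous_midpoint[OF assms(2)]]
    by simp
  then show ?thesis by blast
qed

end
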